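(* Let $G=(V,E)$ be a graph of goods and let $n\ge 1$ agents be given with utility functions on $G$. If all agents except at most one are of the same type, then an mms-allocation of the goods of $G$ to the $n$ agents exists.
   Context: A graph of goods is a finite connected graph $G=(V,E)$ whose vertices are goods. A utility function on $G$ assigns a non-negative real number to each good and is extended additively to sets: $u(X)=\sum_{v\in X}u(v)$. A $G$-bundle is a subset of $V$ that induces a connected subgraph of $G$ (the empty set is also allowed as a bundle). An $n$-split of $G$ is a sequence $P_1,\dots,P_n$ of pairwise disjoint $G$-bundles (possibly empty) whose union is $V$. The maximin share is $\mathrm{mms}^{(n)}(G,u)=\max_{P_1,\dots,P_n}\min_{i} u(P_i)$, the maximum taken over all $n$-splits of $G$. Given agents $1,\dots,n$ with utility functions $u_1,\dots,u_n$, an allocation is an $n$-split $P_1,\dots,P_n$ where $P_i$ is given to agent $i$; it is an mms-allocation if $u_i(P_i)\ge \mathrm{mms}^{(n)}(G,u_i)$ for all $i$ ($n$ being the number of agents). Two agents are of the same type if they have the same utility function. *)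

theory Defs
  imports Complex_Main
begin

definition is_bundle :: "'a set \<Rightarrow> ('a \<times> 'a) set \<Rightarrow> 'a set \<Rightarrow> bool" where
  "is_bundle V E X \<longleftrightarrow> X \<subseteq> V \<and>
     (\<forall>x\<in>X. \<forall>y\<in>X. (\<lambda>a b. (a, b) \<in> E \<and> a \<in> X \<and> b \<in> X)\<^sup>*\<^sup>* x y)"

definition graph_of_goods :: "'a set \<Rightarrow> ('a \<times> 'a) set \<Rightarrow> bool" where
  "graph_of_goods V E \<longleftrightarrow> finite V \<and> V \<noteq> {} \<and> E \<subseteq> V \<times> V \<and> sym E \<and> is_bundle V E V"

definition n_split :: "'a set \<Rightarrow> ('a \<times> 'a) set \<Rightarrow> nat \<Rightarrow> (nat \<Rightarrow> 'a set) \<Rightarrow> bool" where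
  "n_split V E n P \<longleftrightarrow> (\<forall>i<n. is_bundle V E (P i)) \<and>
     (\<forall>i<n. \<forall>j<n. i \<noteq> j \<longrightarrow> P i \<inter> P j = {}) \<and> (\<Union>i<n. P i) = V"

definition mms :: "'a set \<Rightarrow> ('a \<times> 'a) set \<Rightarrow> nat \<Rightarrow> ('a \<Rightarrow> real) \<Rightarrow> real" where
  "mms V E n u = Max {Min ((\<lambda>i. sum u (P i)) ` {..<n}) | P. n_split V E n P}"

definition mms_allocation ::
  "'a set \<Rightarrow> ('a \<times> 'a) set \<Rightarrow> nat \<Rightarrow> (nat \<Rightarrow> 'a \<Rightarrow> real) \<Rightarrow> (nat \<Rightarrow> 'a set) \<Rightarrow> bool" where
  "mms_allocation V E n u P \<longleftrightarrow> n_split V E n P \<and>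
     (\<forall>i<n. sum (u i) (P i) \<ge> mms V E n (u i))"

end

theory Submission
  imports Defs "HOL-Library.FuncSet" "HOL-Combinatorics.Transposition"
begin

text \<open>Take a split that is optimal for the common utility function, so every bundle is
  worth at least its maximin share to all agents of that type. By averaging, the
  remaining agent values some bundle at least at a \<open>1/n\<close> fraction of the whole graph,
  which bounds its own maximin share. Handing that bundle to the remaining agent and
  giving its former owner the bundle at the remaining agent's position leaves everyone
  satisfied.\<close>

lemma n_split_bundle_subset: "n_split V E n P \<Longrightarrow> i < n \<Longrightarrow> P i \<subseteq> V"
  by (auto simp: n_split_def is_bundle_def)

lemma sum_n_split:
  assumes "finite V" "n_split V E n P"
  shows "(\<Sum>i<n. sum w (P i)) = sum w V"
proof -
  have "sum w (\<Union>i<n. P i) = (\<Sum>i<n. sum w (P i))"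
    using assms n_split_bundle_subset[OF assms(2)] finite_subset
    by (intro sum.UNION_disjoint) (auto simp: n_split_def)
  then show ?thesis
    using assms(2) by (simp add: n_split_def)
qed

lemma n_split_whole_first:
  assumes "graph_of_goods V E" "n \<ge> 1"
  shows "n_split V E n (\<lambda>i. if i = 0 then V else {})"
  using assms by (auto simp: n_split_def graph_of_goods_def is_bundle_def)

lemma n_split_comp_transpose:
  assumes "n_split V E n P" "j < n" "k < n"
  shows "n_split V E n (P \<circ> Transposition.transpose j k)"
proof -
  let ?s = "Transposition.transpose j k"
  have "?s ` {..<n} = {..<n}"
    using assms(2,3) by simp
  then have "(\<Union>i<n. P (?s i)) = (\<Union>i<n. P i)"
    by (metis image_image)
  moreover have "?s i < n" if "i < n" for i
    using that assms(2,3) by (auto simp: Transposition.transpose_def)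
  moreover have "?s i \<noteq> ?s l" if "i \<noteq> l" for i l
    using that transpose_eq_imp_eq by metis
  ultimately show ?thesis
    using assms(1) unfolding n_split_def by auto
qed

lemma finite_n_split_values:
  assumes "finite V"
  shows "finite {Min ((\<lambda>i. sum w (P i)) ` {..<n}) | P. n_split V E n P}"
proof -
  let ?val = "\<lambda>Q. Min ((\<lambda>i. sum w (Q i)) ` {..<n})"
  have "{?val P | P. n_split V E n P} \<subseteq> ?val ` ({..<n} \<rightarrow>\<^sub>E Pow V)"
  proof clarify
    fix P assume P: "n_split V E n P"
    have "?val P = ?val (restrict P {..<n})"
      by (metis (no_types, lifting) image_cong restrict_apply')
    moreover have "restrict P {..<n} \<in> {..<n} \<rightarrow>\<^sub>E Pow V"
      using n_split_bundle_subset[OF P] by auto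
    ultimately show "?val P \<in> ?val ` ({..<n} \<rightarrow>\<^sub>E Pow V)"
      by blast
  qed
  then show ?thesis
    using assms finite_subset by (blast intro: finite_PiE)
qed

lemma mms_attained:
  assumes "graph_of_goods V E" "n \<ge> 1"
  obtains P where "n_split V E n P" "\<forall>i<n. mms V E n w \<le> sum w (P i)"
proof -
  have "finite V"
    using assms(1) by (simp add: graph_of_goods_def)
  moreover have "{Min ((\<lambda>i. sum w (P i)) ` {..<n}) | P. n_split V E n P} \<noteq> {}"
    using n_split_whole_first[OF assms] by blast
  ultimately have "mms V E n w \<in> {Min ((\<lambda>i. sum w (P i)) ` {..<n}) | P. n_split V E n P}"
    unfolding mms_def by (intro Max_in finite_n_split_values)
  then obtain P where "n_split V E n P" "mms V E n w = Min ((\<lambda>i. sum w (P i)) ` {..<n})"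
    by blast
  then show thesis
    using that by simp
qed

lemma n_split_min_le_average:
  assumes "finite V" "n_split V E n P" "n \<ge> 1"
  shows "Min ((\<lambda>i. sum w (P i)) ` {..<n}) \<le> sum w V / n"
proof -
  let ?m = "Min ((\<lambda>i. sum w (P i)) ` {..<n})"
  have "n * ?m = (\<Sum>i<n. ?m)"
    by simp
  also have "\<dots> \<le> (\<Sum>i<n. sum w (P i))"
    by (intro sum_mono) simp
  also have "\<dots> = sum w V"
    using sum_n_split[OF assms(1,2)] .
  finally show ?thesis
    using assms(3) by (simp add: field_simps)
qed

lemma mms_le_average:
  assumes "graph_of_goods V E" "n \<ge> 1"
  shows "mms V E n w \<le> sum w V / n"
proof -
  have "finite V"
    using assms(1) by (simp add: graph_of_goods_def)
  moreover have "{Min ((\<lambda>i. sum w (P i)) ` {..<n}) | P. n_split V E n P} \<noteq> {}"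
    using n_split_whole_first[OF assms] by blast
  ultimately show ?thesis
    unfolding mms_def
    using n_split_min_le_average assms(2) by (auto intro!: Max.boundedI finite_n_split_values)
qed

lemma n_split_ex_bundle_ge_average:
  assumes "finite V" "n_split V E n P" "n \<ge> 1"
  obtains k where "k < n" "sum w V / n \<le> sum w (P k)"
proof (rule ccontr)
  assume "\<not> thesis"
  with that have "\<forall>k<n. sum w (P k) < sum w V / n"
    by force
  then have "(\<Sum>i<n. sum w (P i)) < (\<Sum>i<n. sum w V / n)"
    using assms(3) by (intro sum_strict_mono) (auto simp: lessThan_empty_iff)
  then show False
    using sum_n_split[OF assms(1,2), of w] assms(3) by simp
qed

lemma mms_cong:
  assumes "\<forall>v\<in>V. w v = w' v"
  shows "mms V E n w = mms V E n w'"
proof -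
  have "Min ((\<lambda>i. sum w (P i)) ` {..<n}) = Min ((\<lambda>i. sum w' (P i)) ` {..<n})"
    if "n_split V E n P" for P
    using n_split_bundle_subset[OF that] assms
    by (intro arg_cong[where f = Min] image_cong refl sum.cong) auto
  then show ?thesis
    unfolding mms_def by metis
qed

lemma mms_allocation_exists_if_all_but_one_agree:
  assumes "graph_of_goods V E" "n \<ge> 1" "j < n"
    and agree: "\<forall>i<n. i \<noteq> j \<longrightarrow> (\<forall>v\<in>V. u i v = w v)"
  shows "\<exists>P. mms_allocation V E n u P"
proof -
  have "finite V"
    using assms(1) by (simp add: graph_of_goods_def)
  obtain P where P: "n_split V E n P" "\<forall>i<n. mms V E n w \<le> sum w (P i)"
    using mms_attained[OF assms(1,2)] .
  obtain k where k: "k < n" "sum (u j) V / n \<le> sum (u j) (P k)"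
    using n_split_ex_bundle_ge_average[OF \<open>finite V\<close> P(1) assms(2)] .
  define R where "R = P \<circ> Transposition.transpose j k"
  have R: "n_split V E n R"
    unfolding R_def using n_split_comp_transpose[OF P(1) assms(3) k(1)] .
  have "mms V E n (u i) \<le> sum (u i) (R i)" if "i < n" for i
  proof (cases "i = j")
    case True
    then show ?thesis
      using k(2) mms_le_average[OF assms(1,2), of "u j"] by (simp add: R_def)
  next
    case False
    have "Transposition.transpose j k i < n"
      using that assms(3) k(1) by (simp add: Transposition.transpose_def)
    then have "mms V E n w \<le> sum w (R i)"
      using P(2) by (simp add: R_def)
    moreover have "sum (u i) (R i) = sum w (R i)"
      using agree that False n_split_bundle_subset[OF R that] by (intro sum.cong) auto
    moreover have "mms V E n (u i) = mms V E n w"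
      using agree that False by (intro mms_cong) simp
    ultimately show ?thesis
      by simp
  qed
  with R show ?thesis
    unfolding mms_allocation_def by blast
qed

theorem proposition2p1:
  fixes V :: "'a set" and E :: "('a \<times> 'a) set" and n :: nat
    and u :: "nat \<Rightarrow> 'a \<Rightarrow> real"
  assumes "graph_of_goods V E"
    and "n \<ge> 1"
    and "\<forall>i<n. \<forall>v\<in>V. u i v \<ge> 0"
    and "\<exists>j<n. \<forall>i<n. \<forall>k<n. i \<noteq> j \<and> k \<noteq> j \<longrightarrow> (\<forall>v\<in>V. u i v = u k v)"
  shows "\<exists>P. mms_allocation V E n u P"
proof -
  obtain j where j: "j < n" "\<forall>i<n. \<forall>k<n. i \<noteq> j \<and> k \<noteq> j \<longrightarrow> (\<forall>v\<in>V. u i v = u k v)"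
    using assms(4) by blast
  define c :: nat where "c = (if j = 0 then 1 else 0)"
  \<comment> \<open>\<open>c\<close> is a valid agent of the common type whenever some agent other than \<open>j\<close> exists.\<close>
  have "\<forall>i<n. i \<noteq> j \<longrightarrow> (\<forall>v\<in>V. u i v = u c v)"
  proof (intro allI impI)
    fix i assume "i < n" "i \<noteq> j"
    then have "c < n" "c \<noteq> j"
      using j(1) by (auto simp: c_def)
    with \<open>i < n\<close> \<open>i \<noteq> j\<close> j(2) show "\<forall>v\<in>V. u i v = u c v"
      by blast
  qed
  then show ?thesis
    using mms_allocation_exists_if_all_but_one_agree[OF assms(1,2) j(1)] by blast
qed

end
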